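(* Let $G$ be an edge-coloured multigraph, $M$ a rainbow matching of maximum size in $G$, $C_0$ the set of colours not used on $M$, $t$ a positive integer, $N$ a $t$-auxiliary matching for $M$, and $M' \subseteq M$ with $|M'| < t/2 - 1$. Then there is no $(C_0 \cup C_N)$-coloured rainbow matching of size $|M'|+1$ which is vertex-disjoint from the matching $\{v_e x_e : e \in M_N \setminus M'\} \cup (M \setminus (M_N \cup M'))$.
   Context: A rainbow matching is a matching whose edges have pairwise distinct colours; an edge is $C$-coloured if its colour lies in $C$. Let $V$ be the vertex set of $G$. For a rainbow matching $M$ with unused colour set $C_0$, a $t$-auxiliary matching for $M$ is a matching $N$ each of whose edges has one endpoint in $V\setminus V(M)$ and the other in $V(M)$, such that for each edge of $N$ its pair of endpoints is joined by edges of at least $t$ distinct colours from $C_0$, and no two edges of $N$ intersect the same edge of $M$. $M_N \subseteq M$ is the set of edges of $M$ intersecting an edge of $N$; for $e \in M_N$, $x_e$ is the endpoint of $e$ lying in $V(N)$, $m(x_e)$ the other endpoint of $e$, and $v_e$ the vertex matched to $x_e$ in $N$. $C_N$ is the set of colours of the edges of $M_N$. *)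

theory Defs
  imports Complex_Main
begin

text \<open>An edge-coloured multigraph: vertex set V, edge set E (edge identities, so parallel
edges are allowed), endpoint map ends, colour map col.\<close>
definition ec_multigraph :: "'v set \<Rightarrow> 'e set \<Rightarrow> ('e \<Rightarrow> 'v set) \<Rightarrow> bool" where
  "ec_multigraph V E ends \<longleftrightarrow> finite V \<and> finite E \<and>
     (\<forall>e\<in>E. ends e \<subseteq> V \<and> card (ends e) = 2)"

definition verts :: "('e \<Rightarrow> 'v set) \<Rightarrow> 'e set \<Rightarrow> 'v set" where
  "verts ends M = \<Union>(ends ` M)"

definition is_matching :: "('e \<Rightarrow> 'v set) \<Rightarrow> 'e set \<Rightarrow> bool" where
  "is_matching ends M \<longleftrightarrow> (\<forall>e\<in>M. \<forall>f\<in>M. e \<noteq> f \<longrightarrow> ends e \<inter> ends f = {})"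

definition rainbow_matching ::
  "'e set \<Rightarrow> ('e \<Rightarrow> 'v set) \<Rightarrow> ('e \<Rightarrow> 'c) \<Rightarrow> 'e set \<Rightarrow> bool" where
  "rainbow_matching E ends col M \<longleftrightarrow> M \<subseteq> E \<and> is_matching ends M \<and> inj_on col M"

definition max_rainbow_matching ::
  "'e set \<Rightarrow> ('e \<Rightarrow> 'v set) \<Rightarrow> ('e \<Rightarrow> 'c) \<Rightarrow> 'e set \<Rightarrow> bool" where
  "max_rainbow_matching E ends col M \<longleftrightarrow> rainbow_matching E ends col M \<and>
     (\<forall>R. rainbow_matching E ends col R \<longrightarrow> card R \<le> card M)"

definition unused_colours :: "'e set \<Rightarrow> ('e \<Rightarrow> 'c) \<Rightarrow> 'e set \<Rightarrow> 'c set" where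
  "unused_colours E col M = col ` E - col ` M"

definition aux_matching ::
  "'v set \<Rightarrow> 'e set \<Rightarrow> ('e \<Rightarrow> 'v set) \<Rightarrow> ('e \<Rightarrow> 'c) \<Rightarrow> 'e set \<Rightarrow> nat \<Rightarrow> 'v set set \<Rightarrow> bool" where
  "aux_matching V E ends col M t N \<longleftrightarrow>
     (\<forall>p\<in>N. \<exists>v x. p = {v, x} \<and> v \<in> V - verts ends M \<and> x \<in> verts ends M \<and>
        card (col ` {e\<in>E. ends e = {v, x}} \<inter> unused_colours E col M) \<ge> t) \<and>
     (\<forall>p\<in>N. \<forall>q\<in>N. p \<noteq> q \<longrightarrow> p \<inter> q = {}) \<and>
     (\<forall>p\<in>N. \<forall>q\<in>N. \<forall>e\<in>M. p \<noteq> q \<longrightarrow> \<not> (p \<inter> ends e \<noteq> {} \<and> q \<inter> ends e \<noteq> {}))"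

definition M_N :: "('e \<Rightarrow> 'v set) \<Rightarrow> 'e set \<Rightarrow> 'v set set \<Rightarrow> 'e set" where
  "M_N ends M N = {e\<in>M. ends e \<inter> \<Union>N \<noteq> {}}"

definition C_N :: "('e \<Rightarrow> 'v set) \<Rightarrow> ('e \<Rightarrow> 'c) \<Rightarrow> 'e set \<Rightarrow> 'v set set \<Rightarrow> 'c set" where
  "C_N ends col M N = col ` M_N ends M N"

definition N_pairs :: "('e \<Rightarrow> 'v set) \<Rightarrow> 'v set set \<Rightarrow> 'e set \<Rightarrow> 'v set set" where
  "N_pairs ends N S = {p\<in>N. \<exists>e\<in>S. p \<inter> ends e \<noteq> {}}"

end

theory Submission
  imports Defs
begin

text \<open>Suppose such an \<open>R\<close> exists and let \<open>B\<close> be the edges of \<open>M\<close> sharing a vertex or a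
  colour with \<open>R\<close>. There are at most \<open>2|R| + |col R \<inter> col M|\<close> of them, all in \<open>M\<^sub>N \<union> M'\<close>.
  Every \<open>e \<in> B\<close> outside \<open>M'\<close> can be replaced by an edge on \<open>v\<^sub>e x\<^sub>e\<close>: these pairs are
  disjoint from each other, from \<open>R\<close> and from \<open>M - B\<close>, and each carries at least
  \<open>t > 2|R|\<close> colours of \<open>C\<^sub>0\<close>, enough to pick distinct colours avoiding those of \<open>R\<close>
  greedily. Replacing \<open>|B| - |M'|\<close> such edges, \<open>R \<union> (M - B)\<close> plus the replacements is a
  rainbow matching with \<open>|M| + 1\<close> edges, contradicting the maximality of \<open>M\<close>.\<close>

lemma inj_choice_from_large_sets:
  assumes "finite S" and "\<And>e. e \<in> S \<Longrightarrow> card S \<le> card (A e)"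
  shows "\<exists>g. inj_on g S \<and> (\<forall>e\<in>S. g e \<in> A e)"
  using assms
proof (induction S rule: finite_induct)
  case empty
  then show ?case by auto
next
  case (insert x S)
  then obtain g where g: "inj_on g S" "\<forall>e\<in>S. g e \<in> A e"
    by fastforce
  have "card (g ` S) < card (A x)"
    using card_image_le[OF insert.hyps(1), of g] insert.prems[of x] insert.hyps by simp
  then have "\<not> A x \<subseteq> g ` S"
    using card_mono[OF finite_imageI[OF insert.hyps(1)]] by fastforce
  then obtain y where "y \<in> A x" "y \<notin> g ` S" by blast
  then have "inj_on (g(x := y)) (insert x S) \<and> (\<forall>e\<in>insert x S. (g(x := y)) e \<in> A e)"
    using g insert.hyps(2) by (auto simp: inj_on_def image_iff)
  then show ?case by blast
qed

lemma verts_Un [simp]: "verts ends (A \<union> B) = verts ends A \<union> verts ends B"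
  by (auto simp: verts_def)

lemma rainbow_matching_finite:
  "ec_multigraph V E ends \<Longrightarrow> rainbow_matching E ends col M \<Longrightarrow> finite M"
  by (auto simp: ec_multigraph_def rainbow_matching_def intro: finite_subset)

lemma verts_Int_empty_iff: "verts ends A \<inter> W = {} \<longleftrightarrow> (\<forall>a\<in>A. ends a \<inter> W = {})"
  by (auto simp: verts_def)

lemma rainbow_matching_mono:
  "rainbow_matching E ends col B \<Longrightarrow> A \<subseteq> B \<Longrightarrow> rainbow_matching E ends col A"
  unfolding rainbow_matching_def is_matching_def by (meson inj_on_subset subset_trans subsetD)

lemma rainbow_matching_Un:
  assumes "rainbow_matching E ends col A" "rainbow_matching E ends col B"
    and "verts ends A \<inter> verts ends B = {}" "col ` A \<inter> col ` B = {}"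
  shows "rainbow_matching E ends col (A \<union> B)"
proof -
  have "ends a \<inter> ends b = {}" if "a \<in> A" "b \<in> B" for a b
    using that assms(3) by (auto simp: verts_def)
  then have "is_matching ends (A \<union> B)"
    using assms(1,2) unfolding rainbow_matching_def is_matching_def by blast
  moreover have "inj_on col (A \<union> B)"
    using assms(1,2,4) unfolding rainbow_matching_def inj_on_Un by blast
  ultimately show ?thesis
    using assms(1,2) by (simp add: rainbow_matching_def)
qed

lemma card_verts_le:
  assumes "finite R" "\<And>e. e \<in> R \<Longrightarrow> card (ends e) = 2"
  shows "finite (verts ends R)" "card (verts ends R) \<le> 2 * card R"
proof -
  have "finite (ends e)" if "e \<in> R" for e
    using assms(2)[OF that] by (intro card_ge_0_finite) simp
  then show "finite (verts ends R)"
    using assms(1) by (simp add: verts_def)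
  have "card (verts ends R) \<le> (\<Sum>e\<in>R. card (ends e))"
    unfolding verts_def using card_UN_le[OF assms(1)] by simp
  also have "\<dots> = 2 * card R"
    using assms(2) by simp
  finally show "card (verts ends R) \<le> 2 * card R" .
qed

lemma card_matching_edges_meeting_le:
  assumes "is_matching ends M" "finite W"
  shows "card {e\<in>M. ends e \<inter> W \<noteq> {}} \<le> card W"
proof -
  define B where "B = {e\<in>M. ends e \<inter> W \<noteq> {}}"
  define pick where "pick e = (SOME w. w \<in> ends e \<inter> W)" for e
  have pick: "pick e \<in> ends e \<inter> W" if "e \<in> B" for e
  proof -
    have "\<exists>w. w \<in> ends e \<inter> W" using that unfolding B_def by blast
    then show ?thesis unfolding pick_def by (rule someI_ex)
  qed
  have "inj_on pick B"
  proof (rule inj_onI)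
    fix e f assume ef: "e \<in> B" "f \<in> B" "pick e = pick f"
    then have "pick e \<in> ends e \<inter> ends f" using pick[OF ef(1)] pick[OF ef(2)] by simp
    then show "e = f"
      using ef assms(1) unfolding B_def is_matching_def by blast
  qed
  moreover have "pick ` B \<subseteq> W" using pick by blast
  ultimately show ?thesis
    unfolding B_def[symmetric] using assms(2) by (rule card_inj_on_le)
qed

lemma card_edges_coloured_in_le:
  assumes "inj_on col M" "finite C"
  shows "card {e\<in>M. col e \<in> C} \<le> card (C \<inter> col ` M)"
  using assms by (intro card_inj_on_le[of col]) (auto intro: inj_on_subset)

definition blocked_edges :: "('e \<Rightarrow> 'v set) \<Rightarrow> ('e \<Rightarrow> 'c) \<Rightarrow> 'e set \<Rightarrow> 'e set \<Rightarrow> 'e set" where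
  "blocked_edges ends col M R = {e\<in>M. ends e \<inter> verts ends R \<noteq> {} \<or> col e \<in> col ` R}"

lemma card_blocked_edges_le:
  assumes "is_matching ends M" "inj_on col M" "finite R" "\<And>e. e \<in> R \<Longrightarrow> card (ends e) = 2"
  shows "card (blocked_edges ends col M R) \<le> 2 * card R + card (col ` R \<inter> col ` M)"
proof -
  have fin: "finite (verts ends R)" and card_verts: "card (verts ends R) \<le> 2 * card R"
    using card_verts_le assms(3,4) by blast+
  have "blocked_edges ends col M R = {e\<in>M. ends e \<inter> verts ends R \<noteq> {}} \<union> {e\<in>M. col e \<in> col ` R}"
    by (auto simp: blocked_edges_def)
  then have "card (blocked_edges ends col M R)
      \<le> card {e\<in>M. ends e \<inter> verts ends R \<noteq> {}} + card {e\<in>M. col e \<in> col ` R}"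
    by (simp add: card_Un_le)
  also have "\<dots> \<le> card (verts ends R) + card (col ` R \<inter> col ` M)"
    using card_matching_edges_meeting_le[OF assms(1) fin]
      card_edges_coloured_in_le[OF assms(2) finite_imageI[OF assms(3), of col]]
    by linarith
  also have "\<dots> \<le> 2 * card R + card (col ` R \<inter> col ` M)"
    using card_verts by simp
  finally show ?thesis .
qed

lemma blocked_edges_subset:
  assumes "inj_on col M" "K \<subseteq> M" "col ` R \<subseteq> unused_colours E col M \<union> col ` K"
    and "verts ends R \<inter> verts ends (M - (K \<union> M')) = {}"
  shows "blocked_edges ends col M R \<subseteq> K \<union> M'"
proof
  fix e assume e: "e \<in> blocked_edges ends col M R"
  then have "e \<in> M" by (simp add: blocked_edges_def)
  show "e \<in> K \<union> M'"
  proof (rule ccontr)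
    assume out: "e \<notin> K \<union> M'"
    then have "ends e \<subseteq> verts ends (M - (K \<union> M'))"
      using \<open>e \<in> M\<close> unfolding verts_def by (intro Union_upper) simp
    then have "ends e \<inter> verts ends R = {}" using assms(4) by (meson disjoint_iff subsetD)
    then have "col e \<in> col ` R" using e by (simp add: blocked_edges_def)
    moreover have "col e \<notin> unused_colours E col M"
      using \<open>e \<in> M\<close> by (simp add: unused_colours_def)
    moreover have "col e \<notin> col ` K"
    proof
      assume "col e \<in> col ` K"
      then obtain f where "f \<in> K" "col f = col e" by (metis imageE)
      then have "f = e" using \<open>e \<in> M\<close> assms(1,2) by (meson inj_onD subsetD)
      with \<open>f \<in> K\<close> out show False by blast
    qed
    ultimately show False using assms(3) by blast
  qed
qed

lemma rainbow_matching_exchange: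
  assumes M: "rainbow_matching E ends col M" and R: "rainbow_matching E ends col R"
    and H: "rainbow_matching E ends col H"
    and fin: "finite M" "finite R" "finite H"
    and verts_H: "verts ends H \<inter> verts ends (R \<union> (M - blocked_edges ends col M R)) = {}"
    and col_H: "col ` H \<inter> (col ` R \<union> col ` M) = {}"
  shows "rainbow_matching E ends col (R \<union> (M - blocked_edges ends col M R) \<union> H)"
    and "card (R \<union> (M - blocked_edges ends col M R) \<union> H)
      = card R + card (M - blocked_edges ends col M R) + card H"
proof -
  define K where "K = M - blocked_edges ends col M R"
  have K: "rainbow_matching E ends col K"
    using M unfolding K_def by (rule rainbow_matching_mono) blast
  have unblocked: "ends f \<inter> verts ends R = {}" "col f \<notin> col ` R" if "f \<in> K" for f
    using that unfolding K_def blocked_edges_def by auto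
  have RK: "verts ends R \<inter> verts ends K = {}" "col ` R \<inter> col ` K = {}"
    using unblocked by (auto simp: verts_Int_empty_iff Int_commute)
  have RKH: "col ` (R \<union> K) \<inter> col ` H = {}"
    using col_H unfolding K_def by fast
  have "verts ends (R \<union> K) \<inter> verts ends H = {}"
    using verts_H unfolding K_def by (simp add: Int_commute)
  from rainbow_matching_Un[OF rainbow_matching_Un[OF R K RK] H this RKH]
  show "rainbow_matching E ends col (R \<union> (M - blocked_edges ends col M R) \<union> H)"
    unfolding K_def .
  have "finite K" using fin(1) unfolding K_def by simp
  have "card (R \<union> K \<union> H) = card (R \<union> K) + card H"
    using fin \<open>finite K\<close> RKH by (intro card_Un_disjoint) fast+
  also have "card (R \<union> K) = card R + card K"
    using fin \<open>finite K\<close> RK(2) by (intro card_Un_disjoint) fast+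
  finally show "card (R \<union> (M - blocked_edges ends col M R) \<union> H)
      = card R + card (M - blocked_edges ends col M R) + card H"
    unfolding K_def .
qed

lemma aux_matchingD:
  assumes "aux_matching V E ends col M t N"
  shows "p \<in> N \<Longrightarrow> \<exists>v x. p = {v, x} \<and> v \<in> V - verts ends M \<and> x \<in> verts ends M \<and>
        t \<le> card (col ` {e\<in>E. ends e = {v, x}} \<inter> unused_colours E col M)"
    and "p \<in> N \<Longrightarrow> q \<in> N \<Longrightarrow> p \<noteq> q \<Longrightarrow> p \<inter> q = {}"
    and "p \<in> N \<Longrightarrow> q \<in> N \<Longrightarrow> e \<in> M \<Longrightarrow> p \<inter> ends e \<noteq> {} \<Longrightarrow> q \<inter> ends e \<noteq> {} \<Longrightarrow> p = q"
  using assms unfolding aux_matching_def by (simp, meson, meson)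

text \<open>The edge \<open>v\<^sub>e x\<^sub>e\<close> of \<open>N\<close> at \<open>e \<in> M\<^sub>N\<close>; it is unique by the last clause of
  \<^const>\<open>aux_matching\<close>.\<close>
definition aux_edge :: "'v set set \<Rightarrow> ('e \<Rightarrow> 'v set) \<Rightarrow> 'e \<Rightarrow> 'v set" where
  "aux_edge N ends e = (THE p. p \<in> N \<and> p \<inter> ends e \<noteq> {})"

lemma aux_edge:
  assumes aux: "aux_matching V E ends col M t N" and e: "e \<in> M_N ends M N"
  shows "aux_edge N ends e \<in> N" "aux_edge N ends e \<inter> ends e \<noteq> {}"
proof -
  from e obtain p where p: "p \<in> N" "p \<inter> ends e \<noteq> {}" and "e \<in> M"
    unfolding M_N_def by blast
  have "q = p" if "q \<in> N" "q \<inter> ends e \<noteq> {}" for q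
    using aux_matchingD(3)[OF aux that(1) p(1) \<open>e \<in> M\<close> that(2) p(2)] .
  with p have "\<exists>!p. p \<in> N \<and> p \<inter> ends e \<noteq> {}" by blast
  from theI'[OF this] show "aux_edge N ends e \<in> N" "aux_edge N ends e \<inter> ends e \<noteq> {}"
    unfolding aux_edge_def by blast+
qed

lemma aux_edge_Int_verts:
  assumes aux: "aux_matching V E ends col M t N" and e: "e \<in> M_N ends M N"
  shows "aux_edge N ends e \<inter> verts ends M \<subseteq> ends e"
proof -
  obtain v x where vx: "aux_edge N ends e = {v, x}" "v \<notin> verts ends M"
    using aux_matchingD(1)[OF aux aux_edge(1)[OF aux e]] by blast
  have "ends e \<subseteq> verts ends M"
    using e unfolding M_N_def verts_def by blast
  then show ?thesis
    using vx aux_edge(2)[OF aux e] by auto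
qed

lemma aux_edge_Int_ends:
  assumes aux: "aux_matching V E ends col M t N" and "is_matching ends M"
    and e: "e \<in> M_N ends M N" and "f \<in> M" "f \<noteq> e"
  shows "aux_edge N ends e \<inter> ends f = {}"
proof -
  have "e \<in> M" using e by (simp add: M_N_def)
  then have "ends f \<subseteq> verts ends M" "ends e \<inter> ends f = {}"
    using assms(2,4,5) unfolding verts_def is_matching_def by blast+
  then show ?thesis
    using aux_edge_Int_verts[OF aux e] by blast
qed

lemma aux_edges_disjoint:
  assumes aux: "aux_matching V E ends col M t N" and "is_matching ends M"
    and e: "e \<in> M_N ends M N" and e': "e' \<in> M_N ends M N" and "e \<noteq> e'"
  shows "aux_edge N ends e \<inter> aux_edge N ends e' = {}"
proof (cases "aux_edge N ends e = aux_edge N ends e'")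
  case True
  have "e' \<in> M" using e' by (simp add: M_N_def)
  with aux_edge_Int_ends[OF aux assms(2) e] \<open>e \<noteq> e'\<close> aux_edge(2)[OF aux e'] True
  show ?thesis by force
next
  case False
  then show ?thesis
    by (rule aux_matchingD(2)[OF aux aux_edge(1)[OF aux e] aux_edge(1)[OF aux e']])
qed

lemma aux_edge_colours:
  assumes aux: "aux_matching V E ends col M t N" and e: "e \<in> M_N ends M N"
  shows "t \<le> card (col ` {f\<in>E. ends f = aux_edge N ends e} \<inter> unused_colours E col M)"
  using aux_matchingD(1)[OF aux aux_edge(1)[OF aux e]] by auto

lemma rainbow_matching_on_aux_edges:
  assumes G: "ec_multigraph V E ends" and M: "rainbow_matching E ends col M"
    and aux: "aux_matching V E ends col M t N" and S: "S \<subseteq> M_N ends M N"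
    and "finite F" and card_le: "card S + card F \<le> t"
  obtains H where "rainbow_matching E ends col H" "card H = card S"
    "col ` H \<subseteq> unused_colours E col M - F"
    "verts ends H \<subseteq> \<Union>(N_pairs ends N S)"
    "verts ends H \<inter> verts ends (M - S) = {}"
proof -
  have "is_matching ends M"
    using M by (simp add: rainbow_matching_def)
  have "finite S"
    using rainbow_matching_finite[OF G M] S unfolding M_N_def by (auto intro: finite_subset)
  define A where
    "A e = col ` {f\<in>E. ends f = aux_edge N ends e} \<inter> unused_colours E col M - F" for e
  have "card S \<le> card (A e)" if "e \<in> S" for e
  proof -
    define K where "K = col ` {f\<in>E. ends f = aux_edge N ends e} \<inter> unused_colours E col M"
    have "t \<le> card K"
      unfolding K_def using aux_edge_colours[OF aux] S that by blast
    moreover have "card K - card F \<le> card (A e)"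
      unfolding A_def K_def[symmetric] using \<open>finite F\<close> by (rule diff_card_le_card_Diff)
    ultimately show ?thesis
      using card_le by arith
  qed
  with inj_choice_from_large_sets[OF \<open>finite S\<close>]
  obtain g where g: "inj_on g S" "\<And>e. e \<in> S \<Longrightarrow> g e \<in> A e"
    by metis
  have "\<exists>f. f \<in> E \<and> ends f = aux_edge N ends e \<and> col f = g e" if "e \<in> S" for e
    using g(2)[OF that] unfolding A_def by auto
  then obtain h where h: "\<And>e. e \<in> S \<Longrightarrow> h e \<in> E \<and> ends (h e) = aux_edge N ends e \<and> col (h e) = g e"
    by metis
  have inj_col_h: "inj_on (col \<circ> h) S"
    using g(1) h by (simp add: inj_on_def)
  show thesis
  proof (rule that[of "h ` S"])
    have "ends (h e) \<inter> ends (h e') = {}" if "e \<in> S" "e' \<in> S" "h e \<noteq> h e'" for e e'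
    proof -
      have "e \<noteq> e'" using that(3) by blast
      with that(1,2) S show ?thesis
        using aux_edges_disjoint[OF aux \<open>is_matching ends M\<close>, of e e'] h by auto
    qed
    then have "is_matching ends (h ` S)"
      unfolding is_matching_def by blast
    then show "rainbow_matching E ends col (h ` S)"
      using h inj_on_imageI[OF inj_col_h] by (auto simp: rainbow_matching_def)
    show "card (h ` S) = card S"
      using card_image[OF inj_on_imageI2[OF inj_col_h]] .
    show "col ` h ` S \<subseteq> unused_colours E col M - F"
      using g(2) h unfolding A_def by auto
    show "verts ends (h ` S) \<subseteq> \<Union>(N_pairs ends N S)"
    proof
      fix v assume "v \<in> verts ends (h ` S)"
      then obtain e where "e \<in> S" "v \<in> aux_edge N ends e"
        using h unfolding verts_def by auto
      moreover have "aux_edge N ends e \<in> N_pairs ends N S"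
        using aux_edge[OF aux] S \<open>e \<in> S\<close> unfolding N_pairs_def by blast
      ultimately show "v \<in> \<Union>(N_pairs ends N S)" by blast
    qed
    have "ends (h e) \<inter> verts ends (M - S) = {}" if "e \<in> S" for e
    proof -
      have "ends f \<inter> aux_edge N ends e = {}" if "f \<in> M - S" for f
        using aux_edge_Int_ends[OF aux \<open>is_matching ends M\<close>, of e f] S \<open>e \<in> S\<close> that
        by (auto simp: Int_commute)
      then have "verts ends (M - S) \<inter> aux_edge N ends e = {}"
        by (simp add: verts_Int_empty_iff)
      then show ?thesis
        using h[OF that] by blast
    qed
    then show "verts ends (h ` S) \<inter> verts ends (M - S) = {}"
      by (simp add: verts_Int_empty_iff)
  qed
qed

lemma blocked_edges_replacement:
  assumes G: "ec_multigraph V E ends" and M: "rainbow_matching E ends col M"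
    and aux: "aux_matching V E ends col M t N" and R: "rainbow_matching E ends col R"
    and blocked: "blocked_edges ends col M R \<subseteq> M_N ends M N \<union> M'" and "finite M'"
    and R_card: "card R \<le> card M' + 1" and t: "2 * card R < t"
  obtains H where "rainbow_matching E ends col H"
    "card (blocked_edges ends col M R) \<le> card H + card M'"
    "col ` H \<inter> (col ` R \<union> col ` M) = {}"
    "verts ends H \<subseteq> \<Union>(N_pairs ends N (M_N ends M N - M'))"
    "verts ends H \<inter> verts ends (M - blocked_edges ends col M R) = {}"
proof -
  define B where "B = blocked_edges ends col M R"
  have "card B - card M' \<le> card (B - M')"
    using \<open>finite M'\<close> by (rule diff_card_le_card_Diff)
  then obtain S where "S \<subseteq> B - M'" and S_card: "card S = card B - card M'"
    by (rule obtain_subset_with_card_n)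
  with blocked have S: "S \<subseteq> M_N ends M N - M'" "S \<subseteq> M_N ends M N" "S \<subseteq> B"
    unfolding B_def by blast+
  have "finite R" "\<And>e. e \<in> R \<Longrightarrow> card (ends e) = 2" "inj_on col R"
    using rainbow_matching_finite[OF G R] G R by (auto simp: ec_multigraph_def rainbow_matching_def)
  moreover have "is_matching ends M" "inj_on col M"
    using M by (simp_all add: rainbow_matching_def)
  ultimately have B_card: "card B \<le> 2 * card R + card (col ` R \<inter> col ` M)"
    unfolding B_def by (intro card_blocked_edges_le)
  define F where "F = col ` R - col ` M"
  have "card F = card R - card (col ` R \<inter> col ` M)" "card (col ` R \<inter> col ` M) \<le> card R"
    using \<open>finite R\<close> card_image[OF \<open>inj_on col R\<close>] card_mono[of "col ` R" "col ` R \<inter> col ` M"]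
    unfolding F_def by (simp_all add: card_Diff_subset_Int)
  then have "card S + card F \<le> t"
    using S_card B_card R_card t by linarith
  moreover have "finite F"
    unfolding F_def using \<open>finite R\<close> by simp
  ultimately obtain H where H: "rainbow_matching E ends col H" "card H = card S"
    "col ` H \<subseteq> unused_colours E col M - F" "verts ends H \<subseteq> \<Union>(N_pairs ends N S)"
    "verts ends H \<inter> verts ends (M - S) = {}"
    using rainbow_matching_on_aux_edges[OF G M aux S(2)] by blast
  show thesis
  proof (rule that[OF H(1)], unfold B_def[symmetric])
    show "card B \<le> card H + card M'"
      using H(2) S_card by linarith
    show "col ` H \<inter> (col ` R \<union> col ` M) = {}"
      using H(3) unfolding F_def unused_colours_def by blast
    have "\<Union>(N_pairs ends N S) \<subseteq> \<Union>(N_pairs ends N (M_N ends M N - M'))"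
      using S(1) unfolding N_pairs_def by blast
    then show "verts ends H \<subseteq> \<Union>(N_pairs ends N (M_N ends M N - M'))"
      using H(4) by blast
    have "verts ends (M - B) \<subseteq> verts ends (M - S)"
      using S(3) unfolding verts_def by blast
    then show "verts ends H \<inter> verts ends (M - B) = {}"
      using H(5) by blast
  qed
qed

theorem lemma2p5:
  fixes V :: "'v set" and E :: "'e set" and ends :: "'e \<Rightarrow> 'v set" and col :: "'e \<Rightarrow> 'c"
    and M M' :: "'e set" and N :: "'v set set" and t :: nat
  assumes "ec_multigraph V E ends"
    and "max_rainbow_matching E ends col M"
    and "t > 0"
    and "aux_matching V E ends col M t N"
    and "M' \<subseteq> M"
    and "real (card M') < real t / 2 - 1"
  shows "\<not> (\<exists>R. rainbow_matching E ends col R \<and>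
            col ` R \<subseteq> unused_colours E col M \<union> C_N ends col M N \<and>
            card R = card M' + 1 \<and>
            verts ends R \<inter> (\<Union>(N_pairs ends N (M_N ends M N - M')) \<union>
                             verts ends (M - (M_N ends M N \<union> M'))) = {})"
proof (intro notI, elim exE conjE, goal_cases)
  case (1 R)
  note R = "1"(1) and R_col = "1"(2) and R_card = "1"(3) and R_verts = "1"(4)
  have M: "rainbow_matching E ends col M"
    and M_max: "\<And>Q. rainbow_matching E ends col Q \<Longrightarrow> card Q \<le> card M"
    using assms(2) by (auto simp: max_rainbow_matching_def)
  have fin: "finite M" "finite R" "finite M'"
    using rainbow_matching_finite[OF assms(1)] M R assms(5) by (auto intro: finite_subset)
  define B where "B = blocked_edges ends col M R"
  have "B \<subseteq> M_N ends M N \<union> M'"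
    unfolding B_def using M R_col R_verts
    by (intro blocked_edges_subset) (auto simp: rainbow_matching_def C_N_def M_N_def)
  moreover have "2 * card R < t"
    using assms(6) R_card by linarith
  ultimately obtain H where H: "rainbow_matching E ends col H" "card B \<le> card H + card M'"
    "col ` H \<inter> (col ` R \<union> col ` M) = {}"
    "verts ends H \<subseteq> \<Union>(N_pairs ends N (M_N ends M N - M'))"
    "verts ends H \<inter> verts ends (M - B) = {}"
    using blocked_edges_replacement[OF assms(1) M assms(4) R _ fin(3) eq_imp_le[OF R_card]]
    unfolding B_def by blast
  have "verts ends H \<inter> verts ends (R \<union> (M - B)) = {}"
    using H(4,5) R_verts by (simp only: verts_Un Int_Un_distrib) blast
  with rainbow_matching_exchange[OF M R H(1) fin(1,2) rainbow_matching_finite[OF assms(1) H(1)]] H(3)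
  have Q: "rainbow_matching E ends col (R \<union> (M - B) \<union> H)"
    and Q_card: "card (R \<union> (M - B) \<union> H) = card R + card (M - B) + card H"
    unfolding B_def by blast+
  have "card (M - B) = card M - card B" "card B \<le> card M"
    using fin(1) by (auto simp: B_def blocked_edges_def intro: card_Diff_subset card_mono)
  then show False
    using M_max[OF Q] Q_card H(2) R_card by linarith
qed

end
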